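(* Let $E$ be a graph, $X\subseteq {\rm Reg}(E)$, $Y={\rm Reg}(E)\setminus X$, and let $c=e_1e_2\cdots e_n$ be a cycle without exits based at a vertex $w$. Put $\mu_0=w$ and, for $1\le k<n$, $\mu_k=e_1\cdots e_k$, and let $I=\{0\}\cup\{k: 1\le k<n,\ s(e_k)\in Y\}$. Then $$wC_K^X(E)w=\Big\{\sum_{\substack{0\le i\le t_1,\ 0\le j\le t_2,\ k\in I}} l_{ijk}\, c^i\mu_k\mu_k^*(c^* )^j \ :\ l_{ijk}\in K,\ t_1,t_2\in\mathbb N\cup\{0\}\Big\},$$ where $c^0=(c^* )^0=w$.
   Context: Let $K$ be a field and $E=(E^0,E^1,r,s)$ a directed graph (vertices $E^0$, edges $E^1$, range and source maps $r,s:E^1\to E^0$; no countability or finiteness assumptions). A vertex $v$ is a sink if $s^{-1}(v)=\emptyset$ and regular if $s^{-1}(v)$ is finite and nonempty; ${\rm Reg}(E)$ is the set of regular vertices. A path of length $n\ge 1$ is a sequence $\xi_1\cdots\xi_n$ of edges with $r(\xi_i)=s(\xi_{i+1})$; vertices are paths of length $0$; ${\rm Path}(E)$ is the set of finite paths, with $s,r$ extended to paths in the obvious way. For $X\subseteq{\rm Reg}(E)$, the relative Cohn path algebra $C_K^X(E)$ is the free $K$-algebra generated by $E^0\cup E^1\cup\{e^*:e\in E^1\}$ subject to: $vw=\delta_{v,w}v$ ($v,w\in E^0$); $s(e)e=er(e)=e$ and $r(e)e^*=e^*s(e)=e^*$ ($e\in E^1$); $e^*f=\delta_{e,f}r(e)$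 ($e,f\in E^1$); $v=\sum_{e\in s^{-1}(v)}ee^*$ for every $v\in X$. For a path $\alpha=\alpha_1\cdots\alpha_n$, $\alpha^*=\alpha_n^*\cdots\alpha_1^*$, and $v^*=v$ for vertices. A closed path is a path $\alpha=e_1\cdots e_n$ ($n\ge1$) with $r(e_n)=s(e_1)$; it is a cycle if $s(e_i)\ne s(e_j)$ for $i\neq j$, and it is based at $s(e_1)$. An exit of a path $e_1\cdots e_n$ is an edge $e$ with $s(e)=s(e_i)$ for some $i$ and $e\ne e_i$. *)

theory Defs
  imports Main "HOL-Library.Function_Algebras"
begin

record ('v,'e) graph =
  verts :: "'v set"
  edges :: "'e set"
  src   :: "'e \<Rightarrow> 'v"
  rng   :: "'e \<Rightarrow> 'v"

definition wf_graph :: "('v,'e) graph \<Rightarrow> bool" where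
  "wf_graph E \<longleftrightarrow> (\<forall>e\<in>edges E. src E e \<in> verts E \<and> rng E e \<in> verts E)"

definition src_inv :: "('v,'e) graph \<Rightarrow> 'v \<Rightarrow> 'e set" where
  "src_inv E v = {e \<in> edges E. src E e = v}"

definition Reg :: "('v,'e) graph \<Rightarrow> 'v set" where
  "Reg E = {v \<in> verts E. finite (src_inv E v) \<and> src_inv E v \<noteq> {}}"

text \<open>Generators of the free algebra: vertices, edges, ghost edges.\<close>
datatype ('v,'e) gen = GV 'v | GE 'e | GG 'e

definition gen_ok :: "('v,'e) graph \<Rightarrow> ('v,'e) gen \<Rightarrow> bool" where
  "gen_ok E g = (case g of GV v \<Rightarrow> v \<in> verts E | GE e \<Rightarrow> e \<in> edges E | GG e \<Rightarrow> e \<in> edges E)"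

text \<open>The free (non-unital) K-algebra on the generators: finitely supported K-valued
  functions on nonempty words in the generators, with convolution product.\<close>
type_synonym ('v,'e,'k) fa = "('v,'e) gen list \<Rightarrow> 'k"

definition fa_elems :: "('v,'e) graph \<Rightarrow> ('v,'e,'k::field) fa set" where
  "fa_elems E = {f. finite {u. f u \<noteq> 0} \<and>
     (\<forall>u. f u \<noteq> 0 \<longrightarrow> u \<noteq> [] \<and> (\<forall>g\<in>set u. gen_ok E g))}"

definition wmono :: "('v,'e) gen list \<Rightarrow> ('v,'e,'k::field) fa" where
  "wmono u = (\<lambda>z. if z = u then 1 else 0)"

definition fmul :: "('v,'e,'k::field) fa \<Rightarrow> ('v,'e,'k) fa \<Rightarrow> ('v,'e,'k) fa" where
  "fmul f g = (\<lambda>z. \<Sum>p\<in>{(a,b). a @ b = z}. f (fst p) * g (snd p))"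

definition is_ideal :: "('v,'e) graph \<Rightarrow> ('v,'e,'k::field) fa set \<Rightarrow> bool" where
  "is_ideal E I \<longleftrightarrow> I \<subseteq> fa_elems E \<and> 0 \<in> I \<and>
     (\<forall>x\<in>I. \<forall>y\<in>I. x + y \<in> I \<and> x - y \<in> I) \<and>
     (\<forall>x\<in>I. \<forall>f\<in>fa_elems E. fmul f x \<in> I \<and> fmul x f \<in> I)"

definition cohn_rels :: "('v,'e) graph \<Rightarrow> 'v set \<Rightarrow> ('v,'e,'k::field) fa set" where
  "cohn_rels E X =
     {wmono [GV v, GV w] - (if v = w then wmono [GV v] else 0) | v w. v \<in> verts E \<and> w \<in> verts E}
   \<union> {wmono [GV (src E e), GE e] - wmono [GE e] | e. e \<in> edges E}
   \<union> {wmono [GE e, GV (rng E e)] - wmono [GE e] | e. e \<in> edges E}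
   \<union> {wmono [GV (rng E e), GG e] - wmono [GG e] | e. e \<in> edges E}
   \<union> {wmono [GG e, GV (src E e)] - wmono [GG e] | e. e \<in> edges E}
   \<union> {wmono [GG e, GE f] - (if e = f then wmono [GV (rng E e)] else 0) | e f. e \<in> edges E \<and> f \<in> edges E}
   \<union> {wmono [GV v] - (\<Sum>e\<in>src_inv E v. wmono [GE e, GG e]) | v. v \<in> X}"

definition cohn_ideal :: "('v,'e) graph \<Rightarrow> 'v set \<Rightarrow> ('v,'e,'k::field) fa set" where
  "cohn_ideal E X = \<Inter>{I. is_ideal E I \<and> cohn_rels E X \<subseteq> I}"

text \<open>Elements of C_K^X(E) are cosets of the ideal.\<close>
definition cohn_cls :: "('v,'e) graph \<Rightarrow> 'v set \<Rightarrow> ('v,'e,'k::field) fa \<Rightarrow> ('v,'e,'k) fa set" where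
  "cohn_cls E X a = {b \<in> fa_elems E. a - b \<in> cohn_ideal E X}"

definition corner :: "('v,'e) graph \<Rightarrow> 'v set \<Rightarrow> 'v \<Rightarrow> ('v,'e,'k::field) fa set set" where
  "corner E X w = {cohn_cls E X (fmul (fmul (wmono [GV w]) x) (wmono [GV w])) | x. x \<in> fa_elems E}"

definition is_cycle :: "('v,'e) graph \<Rightarrow> 'e list \<Rightarrow> bool" where
  "is_cycle E c \<longleftrightarrow> c \<noteq> [] \<and> set c \<subseteq> edges E \<and>
     (\<forall>i. Suc i < length c \<longrightarrow> rng E (c ! i) = src E (c ! Suc i)) \<and>
     rng E (last c) = src E (hd c) \<and>
     (\<forall>i<length c. \<forall>j<length c. i \<noteq> j \<longrightarrow> src E (c ! i) \<noteq> src E (c ! j))"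

definition no_exit :: "('v,'e) graph \<Rightarrow> 'e list \<Rightarrow> bool" where
  "no_exit E c \<longleftrightarrow> (\<forall>e\<in>edges E. \<forall>i<length c. src E e = src E (c ! i) \<longrightarrow> e = c ! i)"

definition cpow :: "'v \<Rightarrow> 'e list \<Rightarrow> nat \<Rightarrow> ('v,'e) gen list" where
  "cpow w c i = (if i = 0 then [GV w] else concat (replicate i (map GE c)))"

definition cpow_star :: "'v \<Rightarrow> 'e list \<Rightarrow> nat \<Rightarrow> ('v,'e) gen list" where
  "cpow_star w c j = (if j = 0 then [GV w] else concat (replicate j (rev (map GG c))))"

definition mu :: "'v \<Rightarrow> 'e list \<Rightarrow> nat \<Rightarrow> ('v,'e) gen list" where
  "mu w c k = (if k = 0 then [GV w] else map GE (take k c))"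

definition mu_star :: "'v \<Rightarrow> 'e list \<Rightarrow> nat \<Rightarrow> ('v,'e) gen list" where
  "mu_star w c k = (if k = 0 then [GV w] else rev (map GG (take k c)))"

end

theory Submission
  imports Defs
begin

text \<open>Modulo the relations, a word \<open>w u w\<close> is read from left to right, keeping the part read so
  far in the form \<open>w \<alpha> \<beta>\<^sup>*\<close> with paths \<open>\<alpha>, \<beta>\<close>, or zero: a letter that does not start at the current
  end vertex kills the word, a vertex letter that does is absorbed, a ghost edge prolongs \<open>\<beta>\<close>,
  and an edge prolongs \<open>\<alpha>\<close> if \<open>\<beta>\<close> is trivial and otherwise cancels against the preceding ghost
  edge by \<open>e\<^sup>* f = \<delta>\<^sub>e\<^sub>f r(e)\<close>. As \<open>c\<close> has no exits, a path starting at \<open>w\<close> runs along the cycle,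
  so once the word closes up at \<open>w\<close> we have \<open>\<alpha> = c\<^sup>i \<mu>\<^sub>k\<close> and \<open>\<beta> = c\<^sup>j \<mu>\<^sub>k\<close>, with the same \<open>k\<close>
  because both end at \<open>r(\<mu>\<^sub>k)\<close>. If \<open>s(e\<^sub>k) \<in> X\<close>, then \<open>e\<^sub>k\<close> is the only edge leaving \<open>s(e\<^sub>k)\<close>
  and the relation \<open>s(e\<^sub>k) = e\<^sub>k e\<^sub>k\<^sup>*\<close> turns \<open>\<mu>\<^sub>k \<mu>\<^sub>k\<^sup>*\<close> into \<open>\<mu>\<^bsub>k-1\<^esub> \<mu>\<^bsub>k-1\<^esub>\<^sup>*\<close>; hence \<open>k\<close> can
  be taken in \<open>I\<close>. Conversely, \<open>w\<close> fixes every \<open>c\<^sup>i \<mu>\<^sub>k \<mu>\<^sub>k\<^sup>* (c\<^sup>*)\<^sup>j\<close> on both sides.\<close>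

section \<open>The free algebra\<close>

definition smul :: "'k::field \<Rightarrow> ('v,'e,'k) fa \<Rightarrow> ('v,'e,'k) fa" where
  "smul a f = (\<lambda>z. a * f z)"

definition gens_ok :: "('v,'e) graph \<Rightarrow> ('v,'e) gen list \<Rightarrow> bool" where
  "gens_ok E u \<longleftrightarrow> (\<forall>g\<in>set u. gen_ok E g)"

lemma gens_ok_simps [simp]:
  "gens_ok E []"
  "gens_ok E (g # u) \<longleftrightarrow> gen_ok E g \<and> gens_ok E u"
  "gens_ok E (u @ v) \<longleftrightarrow> gens_ok E u \<and> gens_ok E v"
  "gens_ok E (rev u) \<longleftrightarrow> gens_ok E u"
  "gens_ok E (map GE p) \<longleftrightarrow> set p \<subseteq> edges E"
  "gens_ok E (map GG p) \<longleftrightarrow> set p \<subseteq> edges E"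
  by (auto simp: gens_ok_def gen_ok_def)

lemma sum_fun_apply: "sum F S z = (\<Sum>i\<in>S. F i z)"
  by (induction S rule: infinite_finite_induct) auto

lemma splits_eq_image_take_drop: "{(a, b). a @ b = z} = (\<lambda>i. (take i z, drop i z)) ` {..length z}"
proof (intro equalityI subsetI)
  fix p assume "p \<in> {(a, b). a @ b = z}"
  then obtain a b where "p = (a, b)" "a @ b = z" by auto
  then show "p \<in> (\<lambda>i. (take i z, drop i z)) ` {..length z}"
    by (auto intro!: image_eqI[where x = "length a"])
qed auto

lemma finite_splits: "finite {(a, b). a @ b = z}"
  by (simp add: splits_eq_image_take_drop)

lemma fmul_wmono: "fmul (wmono a) (wmono b) = wmono (a @ b)"
proof
  fix z
  have "fmul (wmono a) (wmono b) z = (\<Sum>p\<in>{(x, y). x @ y = z}. if (a, b) = p then 1 else 0)"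
    unfolding fmul_def wmono_def by (rule sum.cong) auto
  also have "\<dots> = (if (a, b) \<in> {(x, y). x @ y = z} then 1 else 0)"
    by (rule sum.delta'[OF finite_splits])
  finally show "fmul (wmono a) (wmono b) z = wmono (a @ b) z"
    by (auto simp: wmono_def)
qed

lemma fmul_wmono_Nil_left [simp]: "fmul (wmono []) f = f"
proof
  fix z
  have "fmul (wmono []) f z = (\<Sum>p\<in>{(x, y). x @ y = z}. if p = ([], z) then f z else 0)"
    unfolding fmul_def wmono_def by (rule sum.cong) auto
  then show "fmul (wmono []) f z = f z"
    by (simp add: finite_splits)
qed

lemma fmul_wmono_Nil_right [simp]: "fmul f (wmono []) = f"
proof
  fix z
  have "fmul f (wmono []) z = (\<Sum>p\<in>{(x, y). x @ y = z}. if p = (z, []) then f z else 0)"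
    unfolding fmul_def wmono_def by (rule sum.cong) auto
  then show "fmul f (wmono []) z = f z"
    by (simp add: finite_splits)
qed

lemma fmul_add_left: "fmul (f + g) h = fmul f h + fmul g h"
  by (rule ext) (simp add: fmul_def distrib_right sum.distrib)

lemma fmul_add_right: "fmul h (f + g) = fmul h f + fmul h g"
  by (rule ext) (simp add: fmul_def distrib_left sum.distrib)

lemma fmul_diff_left: "fmul (f - g) h = fmul f h - fmul g h"
  by (rule ext) (simp add: fmul_def left_diff_distrib sum_subtractf)

lemma fmul_diff_right: "fmul h (f - g) = fmul h f - fmul h g"
  by (rule ext) (simp add: fmul_def right_diff_distrib sum_subtractf)

lemma fmul_zero_left [simp]: "fmul 0 g = 0"
  by (rule ext) (simp add: fmul_def)

lemma fmul_zero_right [simp]: "fmul g 0 = 0"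
  by (rule ext) (simp add: fmul_def)

lemma fmul_smul_left: "fmul (smul a f) g = smul a (fmul f g)"
  by (rule ext) (simp add: fmul_def smul_def sum_distrib_left mult.assoc)

lemma fmul_smul_right: "fmul g (smul a f) = smul a (fmul g f)"
  by (rule ext) (simp add: fmul_def smul_def sum_distrib_left mult.left_commute)

lemma fmul_sum_left: "fmul (sum F S) g = (\<Sum>i\<in>S. fmul (F i) g)"
  by (induction S rule: infinite_finite_induct)
    (metis fmul_zero_left sum.infinite, metis fmul_zero_left sum.empty,
      metis fmul_add_left sum.insert)

lemma fmul_sum_right: "fmul g (sum F S) = (\<Sum>i\<in>S. fmul g (F i))"
  by (induction S rule: infinite_finite_induct)
    (metis fmul_zero_right sum.infinite, metis fmul_zero_right sum.empty,
      metis fmul_add_right sum.insert)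

lemma smul_right_diff_distrib: "smul a (f - g) = smul a f - smul a g"
  by (rule ext) (simp add: smul_def right_diff_distrib)

lemma smul_zero [simp]: "smul a 0 = 0" "smul 0 f = 0"
  by (simp_all add: smul_def fun_eq_iff)

lemma smul_smul: "smul a (smul b f) = smul (a * b) f"
  by (simp add: smul_def mult.assoc)

lemma smul_one [simp]: "smul 1 f = f"
  by (simp add: smul_def)

lemma smul_of_bool [simp]: "smul (of_bool P) f = (if P then f else 0)"
  by (simp add: smul_def fun_eq_iff)

lemma smul_left_distrib: "smul (a + b) f = smul a f + smul b f"
  by (rule ext) (simp add: smul_def distrib_right)

lemma smul_right_distrib: "smul a (f + g) = smul a f + smul a g"
  by (rule ext) (simp add: smul_def distrib_left)

lemma smul_sum_right: "smul a (sum F S) = (\<Sum>i\<in>S. smul a (F i))"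
  by (rule ext) (simp add: smul_def sum_fun_apply sum_distrib_left)

lemma wmono_in_fa_elems: "u \<noteq> [] \<Longrightarrow> gens_ok E u \<Longrightarrow> wmono u \<in> fa_elems E"
  by (auto simp: fa_elems_def wmono_def gens_ok_def)

lemma zero_in_fa_elems: "0 \<in> fa_elems E"
  by (simp add: fa_elems_def)

lemma add_in_fa_elems:
  assumes "f \<in> fa_elems E" "g \<in> fa_elems E"
  shows "f + g \<in> fa_elems E"
proof -
  have "{u. (f + g) u \<noteq> 0} \<subseteq> {u. f u \<noteq> 0} \<union> {u. g u \<noteq> 0}" by auto
  with assms show ?thesis
    unfolding fa_elems_def by (auto intro: finite_subset)
qed

lemma smul_in_fa_elems:
  assumes "f \<in> fa_elems E"
  shows "smul a f \<in> fa_elems E"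
proof -
  have "{u. smul a f u \<noteq> 0} \<subseteq> {u. f u \<noteq> 0}" by (auto simp: smul_def)
  with assms show ?thesis
    unfolding fa_elems_def by (auto intro: finite_subset simp: smul_def)
qed

lemma sum_in_fa_elems: "(\<And>i. i \<in> S \<Longrightarrow> F i \<in> fa_elems E) \<Longrightarrow> sum F S \<in> fa_elems E"
  by (induction S rule: infinite_finite_induct) (auto simp: zero_in_fa_elems add_in_fa_elems)

lemma fa_elems_expand:
  assumes "f \<in> fa_elems E"
  shows "f = (\<Sum>u | f u \<noteq> 0. smul (f u) (wmono u))"
proof
  fix z
  have "finite {u. f u \<noteq> 0}" using assms by (simp add: fa_elems_def)
  moreover have "(\<Sum>u | f u \<noteq> 0. smul (f u) (wmono u)) z = (\<Sum>u | f u \<noteq> 0. if u = z then f z else 0)"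
    unfolding sum_fun_apply by (rule sum.cong) (auto simp: smul_def wmono_def)
  ultimately show "f z = (\<Sum>u | f u \<noteq> 0. smul (f u) (wmono u)) z" by simp
qed

section \<open>Congruence modulo the defining ideal\<close>

lemma zero_in_cohn_ideal: "0 \<in> cohn_ideal E X"
  and cohn_ideal_add: "x \<in> cohn_ideal E X \<Longrightarrow> y \<in> cohn_ideal E X \<Longrightarrow> x + y \<in> cohn_ideal E X"
  and cohn_ideal_diff: "x \<in> cohn_ideal E X \<Longrightarrow> y \<in> cohn_ideal E X \<Longrightarrow> x - y \<in> cohn_ideal E X"
  and cohn_ideal_fmul_left: "f \<in> fa_elems E \<Longrightarrow> x \<in> cohn_ideal E X \<Longrightarrow> fmul f x \<in> cohn_ideal E X"
  and cohn_ideal_fmul_right: "f \<in> fa_elems E \<Longrightarrow> x \<in> cohn_ideal E X \<Longrightarrow> fmul x f \<in> cohn_ideal E X"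
  and cohn_rels_in_ideal: "r \<in> cohn_rels E X \<Longrightarrow> r \<in> cohn_ideal E X"
  unfolding cohn_ideal_def is_ideal_def by blast+

text \<open>The ideal is only an additive subgroup closed under products, not a \<open>K\<close>-subspace, so
  congruence modulo it is not stable under scalars. Rewriting inside a nonempty context, however,
  produces differences all of whose scalar multiples lie in the ideal; \<open>cohn_eq\<close> is that
  scalar-stable congruence.\<close>
definition cohn_eq :: "('v,'e) graph \<Rightarrow> 'v set \<Rightarrow> ('v,'e,'k::field) fa \<Rightarrow> ('v,'e,'k) fa \<Rightarrow> bool" where
  "cohn_eq E X a b \<longleftrightarrow> (\<forall>t. smul t (a - b) \<in> cohn_ideal E X)"

lemma cohn_eq_imp_ideal: "cohn_eq E X a b \<Longrightarrow> a - b \<in> cohn_ideal E X"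
  unfolding cohn_eq_def by (metis smul_one)

lemma cohn_eq_refl [simp]: "cohn_eq E X a a"
  by (simp add: cohn_eq_def zero_in_cohn_ideal)

lemma cohn_eq_sym: "cohn_eq E X a b \<Longrightarrow> cohn_eq E X b a"
  unfolding cohn_eq_def
proof
  fix t assume "\<forall>t. smul t (a - b) \<in> cohn_ideal E X"
  then have "0 - smul t (a - b) \<in> cohn_ideal E X"
    by (blast intro: cohn_ideal_diff zero_in_cohn_ideal)
  then show "smul t (b - a) \<in> cohn_ideal E X"
    by (simp add: smul_right_diff_distrib)
qed

lemma cohn_eq_trans [trans]: "cohn_eq E X a b \<Longrightarrow> cohn_eq E X b c \<Longrightarrow> cohn_eq E X a c"
  unfolding cohn_eq_def
proof
  fix t assume "\<forall>t. smul t (a - b) \<in> cohn_ideal E X" "\<forall>t. smul t (b - c) \<in> cohn_ideal E X"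
  then have "smul t (a - b) + smul t (b - c) \<in> cohn_ideal E X"
    by (blast intro: cohn_ideal_add)
  then show "smul t (a - c) \<in> cohn_ideal E X"
    by (simp add: smul_right_diff_distrib)
qed

lemma cohn_eq_add: "cohn_eq E X a b \<Longrightarrow> cohn_eq E X a' b' \<Longrightarrow> cohn_eq E X (a + a') (b + b')"
  unfolding cohn_eq_def
proof
  fix t assume "\<forall>t. smul t (a - b) \<in> cohn_ideal E X" "\<forall>t. smul t (a' - b') \<in> cohn_ideal E X"
  then have "smul t (a - b) + smul t (a' - b') \<in> cohn_ideal E X"
    by (blast intro: cohn_ideal_add)
  then show "smul t (a + a' - (b + b')) \<in> cohn_ideal E X"
    by (simp add: smul_right_diff_distrib smul_right_distrib algebra_simps)
qed

lemma cohn_eq_smul: "cohn_eq E X a b \<Longrightarrow> cohn_eq E X (smul s a) (smul s b)"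
  unfolding cohn_eq_def by (simp flip: smul_right_diff_distrib add: smul_smul)

lemma cohn_eq_sum: "(\<And>i. i \<in> S \<Longrightarrow> cohn_eq E X (F i) (G i)) \<Longrightarrow> cohn_eq E X (sum F S) (sum G S)"
  by (induction S rule: infinite_finite_induct) (auto intro: cohn_eq_add)

lemma cohn_cls_cong:
  assumes "cohn_eq E X a b"
  shows "cohn_cls E X a = cohn_cls E X b"
proof -
  have ab: "a - b \<in> cohn_ideal E X" using assms by (rule cohn_eq_imp_ideal)
  have "a - y \<in> cohn_ideal E X \<longleftrightarrow> b - y \<in> cohn_ideal E X" for y
  proof
    assume "a - y \<in> cohn_ideal E X"
    from cohn_ideal_diff[OF this ab] show "b - y \<in> cohn_ideal E X" by simp
  next
    assume "b - y \<in> cohn_ideal E X"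
    from cohn_ideal_add[OF this ab] show "a - y \<in> cohn_ideal E X" by simp
  qed
  then show ?thesis by (simp add: cohn_cls_def)
qed

lemma cohn_eq_in_context:
  assumes "gens_ok E al" "gens_ok E be" "al @ be \<noteq> []" "a - b \<in> cohn_ideal E X"
  shows "cohn_eq E X (fmul (wmono al) (fmul a (wmono be))) (fmul (wmono al) (fmul b (wmono be)))"
  unfolding cohn_eq_def
proof
  fix t
  have "smul t (fmul (wmono al) (fmul a (wmono be)) - fmul (wmono al) (fmul b (wmono be))) =
      fmul (wmono al) (fmul (a - b) (smul t (wmono be)))"
    by (simp add: fmul_diff_left fmul_diff_right fmul_smul_right smul_right_diff_distrib)
  also have "\<dots> \<in> cohn_ideal E X"
  proof (cases "be = []")
    case True
    then have "al \<noteq> []" using assms(3) by simp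
    then have "fmul (smul t (wmono al)) (a - b) \<in> cohn_ideal E X"
      using assms by (intro cohn_ideal_fmul_left smul_in_fa_elems wmono_in_fa_elems)
    with True show ?thesis by (simp add: fmul_smul_left fmul_smul_right)
  next
    case False
    then have "fmul (a - b) (smul t (wmono be)) \<in> cohn_ideal E X"
      using assms by (intro cohn_ideal_fmul_right smul_in_fa_elems wmono_in_fa_elems)
    then show ?thesis
      using assms by (cases "al = []") (auto intro: cohn_ideal_fmul_left wmono_in_fa_elems)
  qed
  finally show "smul t (fmul (wmono al) (fmul a (wmono be)) - fmul (wmono al) (fmul b (wmono be)))
      \<in> cohn_ideal E X" .
qed

lemma cohn_eq_rewrite:
  assumes "gens_ok E al" "gens_ok E be" "al @ be \<noteq> []"
    "(wmono A - wmono B :: ('v,'e,'k::field) fa) \<in> cohn_ideal E X"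
  shows "cohn_eq E X (wmono (al @ A @ be) :: ('v,'e,'k) fa) (wmono (al @ B @ be))"
  using cohn_eq_in_context[OF assms] by (simp add: fmul_wmono)

lemma cohn_eq_rewrite_zero:
  assumes "gens_ok E al" "gens_ok E be" "al @ be \<noteq> []"
    "(wmono A :: ('v,'e,'k::field) fa) \<in> cohn_ideal E X"
  shows "cohn_eq E X (wmono (al @ A @ be) :: ('v,'e,'k) fa) 0"
  using cohn_eq_in_context[of E al be "wmono A" 0 X] assms by (simp add: fmul_wmono)

lemma cohn_eq_append:
  assumes "gens_ok E v" "v \<noteq> []" "cohn_eq E X a b"
  shows "cohn_eq E X (fmul a (wmono v)) (fmul b (wmono v))"
  using cohn_eq_in_context[of E "[]" v a b X] assms by (simp add: cohn_eq_imp_ideal)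

section \<open>Rewriting words\<close>

fun gen_src :: "('v,'e) graph \<Rightarrow> ('v,'e) gen \<Rightarrow> 'v" where
  "gen_src E (GV v) = v" | "gen_src E (GE e) = src E e" | "gen_src E (GG e) = rng E e"

fun gen_rng :: "('v,'e) graph \<Rightarrow> ('v,'e) gen \<Rightarrow> 'v" where
  "gen_rng E (GV v) = v" | "gen_rng E (GE e) = rng E e" | "gen_rng E (GG e) = src E e"

lemma gen_src_in_verts: "wf_graph E \<Longrightarrow> gen_ok E g \<Longrightarrow> gen_src E g \<in> verts E"
  by (cases g) (auto simp: gen_ok_def wf_graph_def)

lemma gen_rng_in_verts: "wf_graph E \<Longrightarrow> gen_ok E g \<Longrightarrow> gen_rng E g \<in> verts E"
  by (cases g) (auto simp: gen_ok_def wf_graph_def)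

lemma vertex_rel:
  "v \<in> verts E \<Longrightarrow> v' \<in> verts E \<Longrightarrow>
    wmono [GV v, GV v'] - (if v = v' then wmono [GV v] else 0) \<in> cohn_ideal E X"
  by (rule cohn_rels_in_ideal) (unfold cohn_rels_def, blast)

lemma gen_rng_rel:
  assumes "gen_ok E g"
  shows "wmono [g, GV (gen_rng E g)] - wmono [g] \<in> cohn_ideal E X"
proof (cases g)
  case (GV v)
  with assms vertex_rel[of v E v] show ?thesis by (simp add: gen_ok_def)
qed (use assms in \<open>auto simp: gen_ok_def cohn_rels_def intro!: cohn_rels_in_ideal\<close>)

lemma gen_src_rel:
  assumes "gen_ok E g"
  shows "wmono [GV (gen_src E g), g] - wmono [g] \<in> cohn_ideal E X"
proof (cases g)
  case (GV v)
  with assms vertex_rel[of v E v] show ?thesis by (simp add: gen_ok_def)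
qed (use assms in \<open>auto simp: gen_ok_def cohn_rels_def intro!: cohn_rels_in_ideal\<close>)

lemma ghost_edge_rel:
  "e \<in> edges E \<Longrightarrow> f \<in> edges E \<Longrightarrow>
    wmono [GG e, GE f] - (if e = f then wmono [GV (rng E e)] else 0) \<in> cohn_ideal E X"
  by (rule cohn_rels_in_ideal) (unfold cohn_rels_def, blast)

lemma cuntz_krieger_rel:
  assumes "v \<in> X" "src_inv E v = {e}"
  shows "wmono [GV v] - wmono [GE e, GG e] \<in> cohn_ideal E X"
proof -
  have "wmono [GV v] - (\<Sum>e\<in>src_inv E v. wmono [GE e, GG e]) \<in> cohn_ideal E X"
    using assms(1) by (intro cohn_rels_in_ideal) (unfold cohn_rels_def, blast)
  with assms(2) show ?thesis by simp
qed

lemma absorb_vertex_right: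
  assumes "gens_ok E V" "2 \<le> length V" "gens_ok E be"
  shows "cohn_eq E X (wmono (V @ GV (gen_rng E (last V)) # be) :: ('v,'e,'k::field) fa)
    (wmono (V @ be))"
proof -
  obtain al g where V: "V = al @ [g]" and "al \<noteq> []"
    using assms(2) by (cases V rule: rev_cases) (auto simp: Suc_le_eq)
  then have "cohn_eq E X (wmono (al @ [g, GV (gen_rng E g)] @ be) :: ('v,'e,'k) fa)
      (wmono (al @ [g] @ be))"
    using assms by (intro cohn_eq_rewrite gen_rng_rel) auto
  with V show ?thesis by simp
qed

lemma absorb_vertex_left:
  assumes "gens_ok E (al @ g # be)" "al @ be \<noteq> []"
  shows "cohn_eq E X (wmono (al @ GV (gen_src E g) # g # be) :: ('v,'e,'k::field) fa)
    (wmono (al @ g # be))"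
  using cohn_eq_rewrite[of E al be "[GV (gen_src E g), g]" "[g]" X]
    gen_src_rel[of E g X] assms by simp

lemma absorb_vertex_hd:
  assumes "gens_ok E u" "2 \<le> length u"
  shows "cohn_eq E X (wmono (GV (gen_src E (hd u)) # u) :: ('v,'e,'k::field) fa) (wmono u)"
proof -
  obtain g u' where "u = g # u'" "u' \<noteq> []"
    using assms(2) by (cases u) (auto simp: Suc_le_eq)
  with assms(1) absorb_vertex_left[of E "[]" g u' X] show ?thesis
    by simp
qed

lemma absorb_double_vertex:
  assumes "v \<in> verts E" "gens_ok E u" "u \<noteq> []"
  shows "cohn_eq E X (wmono (GV v # GV v # u) :: ('v,'e,'k::field) fa) (wmono (GV v # u))"
  using absorb_vertex_hd[of E "GV v # u" X] assms by (simp add: gen_ok_def Suc_le_eq)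

lemma vertex_mismatch_zero:
  assumes "wf_graph E" "gens_ok E V" "2 \<le> length V" "gen_ok E l" "gen_src E l \<noteq> gen_rng E (last V)"
  shows "cohn_eq E X (wmono (V @ [l]) :: ('v,'e,'k::field) fa) 0"
proof -
  define t where "t = gen_rng E (last V)"
  have "V \<noteq> []" using assms(3) by auto
  then have "gen_ok E (last V)"
    using assms(2) by (simp add: gens_ok_def)
  with assms(1) have t: "t \<in> verts E"
    unfolding t_def by (rule gen_rng_in_verts)
  have "cohn_eq E X (wmono (V @ [l]) :: ('v,'e,'k) fa) (wmono (V @ [GV t, l]))"
    using absorb_vertex_right[OF assms(2,3), of "[l]"] assms(4)
    by (auto simp: t_def intro: cohn_eq_sym)
  also have "cohn_eq E X (wmono (V @ [GV t, l]) :: ('v,'e,'k) fa)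
      (wmono (V @ [GV t, GV (gen_src E l)] @ [l]))"
    using absorb_vertex_left[of E "V @ [GV t]" l "[]" X] assms t
    by (auto simp: gen_ok_def intro: cohn_eq_sym)
  also have "cohn_eq E X (wmono (V @ [GV t, GV (gen_src E l)] @ [l]) :: ('v,'e,'k) fa) 0"
    using vertex_rel[OF t gen_src_in_verts[OF assms(1,4)], of X] assms
    by (intro cohn_eq_rewrite_zero) (auto simp: t_def)
  finally show ?thesis .
qed

lemma ghost_edge_cancel:
  assumes "gens_ok E V" "V \<noteq> []" "e \<in> edges E"
  shows "cohn_eq E X (wmono (V @ [GG e, GE e]) :: ('v,'e,'k::field) fa)
    (wmono (V @ [GV (rng E e)]))"
proof -
  have "(wmono [GG e, GE e] - wmono [GV (rng E e)] :: ('v,'e,'k) fa) \<in> cohn_ideal E X"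
    using ghost_edge_rel[OF assms(3,3)] by simp
  from cohn_eq_rewrite[where be = "[]", OF assms(1) _ _ this] assms(2) show ?thesis by simp
qed

lemma ghost_edge_mismatch_zero:
  assumes "gens_ok E V" "V \<noteq> []" "e \<in> edges E" "f \<in> edges E" "e \<noteq> f"
  shows "cohn_eq E X (wmono (V @ [GG e, GE f]) :: ('v,'e,'k::field) fa) 0"
proof -
  have "(wmono [GG e, GE f] :: ('v,'e,'k) fa) \<in> cohn_ideal E X"
    using ghost_edge_rel[OF assms(3,4)] assms(5) by simp
  from cohn_eq_rewrite_zero[where be = "[]", OF assms(1) _ _ this] assms(2) show ?thesis by simp
qed

lemma cuntz_krieger_rewrite:
  assumes "gens_ok E V" "V \<noteq> []" "gens_ok E be" "v \<in> X" "src_inv E v = {e}"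
  shows "cohn_eq E X (wmono (V @ [GE e, GG e] @ be) :: ('v,'e,'k::field) fa)
    (wmono (V @ [GV v] @ be))"
proof -
  have "cohn_eq E X (wmono (V @ [GV v] @ be) :: ('v,'e,'k) fa) (wmono (V @ [GE e, GG e] @ be))"
    using assms cuntz_krieger_rel[OF assms(4,5)] by (intro cohn_eq_rewrite) auto
  then show ?thesis by (rule cohn_eq_sym)
qed

abbreviation composable :: "('v,'e) graph \<Rightarrow> ('v,'e) gen list \<Rightarrow> bool" where
  "composable E \<equiv> successively (\<lambda>g h. gen_rng E g = gen_src E h)"

abbreviation is_path :: "('v,'e) graph \<Rightarrow> 'e list \<Rightarrow> bool" where
  "is_path E \<equiv> successively (\<lambda>e f. rng E e = src E f)"

lemma composable_map_GE [simp]: "composable E (map GE p) \<longleftrightarrow> is_path E p"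
  by (simp add: successively_map)

lemma composable_rev_map_GG [simp]: "composable E (rev (map GG p)) \<longleftrightarrow> is_path E p"
  by (simp add: successively_map eq_commute[of "src E _"])

lemma delete_vertex_letters:
  assumes "gens_ok E (p @ y)" "composable E (p @ y)" "2 \<le> length p"
  shows "cohn_eq E X (wmono (p @ y) :: ('v,'e,'k::field) fa)
    (wmono (p @ filter (\<lambda>g. g \<notin> range GV) y))"
  using assms
proof (induction y arbitrary: p)
  case (Cons g y)
  show ?case
  proof (cases "g \<in> range GV")
    case True
    then obtain v where g: "g = GV v" by blast
    have "p \<noteq> []" using Cons.prems(3) by auto
    then have v: "v = gen_rng E (last p)"
      using Cons.prems(2) g by (simp add: successively_append_iff)
    have "cohn_eq E X (wmono (p @ g # y) :: ('v,'e,'k) fa) (wmono (p @ y))"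
      using absorb_vertex_right[of E p y X] Cons.prems g v by simp
    also have "cohn_eq E X (wmono (p @ y) :: ('v,'e,'k) fa)
        (wmono (p @ filter (\<lambda>g. g \<notin> range GV) y))"
      using Cons.prems g v \<open>p \<noteq> []\<close>
      by (intro Cons.IH) (auto simp: successively_append_iff successively_Cons)
    finally show ?thesis using True by simp
  next
    case False
    with Cons.IH[of "p @ [g]"] Cons.prems show ?thesis by simp
  qed
qed simp

section \<open>Paths along an exitless cycle\<close>

locale exitless_cycle =
  fixes E :: "('v,'e) graph" and X :: "'v set" and c :: "'e list" and w :: 'v
  assumes wf: "wf_graph E" and cycle: "is_cycle E c" and no_exit: "no_exit E c"
    and base: "w = src E (hd c)"
begin

definition cycle_path :: "nat \<Rightarrow> 'e list" where
  "cycle_path m = map (\<lambda>i. c ! (i mod length c)) [0..<m]"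

definition cycle_vertex :: "nat \<Rightarrow> 'v" where
  "cycle_vertex m = src E (c ! (m mod length c))"

lemma length_cycle_pos: "0 < length c"
  using cycle by (simp add: is_cycle_def)

lemma cycle_edge: "c ! (i mod length c) \<in> edges E"
  using cycle length_cycle_pos by (auto simp: is_cycle_def)

lemma cycle_vertex_in_verts: "cycle_vertex m \<in> verts E"
  using cycle_edge wf by (auto simp: cycle_vertex_def wf_graph_def)

lemma cycle_vertex_mult [simp]: "cycle_vertex (i * length c) = w"
  using length_cycle_pos by (simp add: cycle_vertex_def base hd_conv_nth)

lemma cycle_vertex_0 [simp]: "cycle_vertex 0 = w"
  using cycle_vertex_mult[of 0] by simp

lemma w_in_verts: "w \<in> verts E"
  using cycle_vertex_in_verts[of 0] by simp

lemma rng_cycle_edge: "rng E (c ! (i mod length c)) = cycle_vertex (Suc i)"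
proof (cases "Suc (i mod length c) < length c")
  case True
  then have "rng E (c ! (i mod length c)) = src E (c ! Suc (i mod length c))"
    using cycle by (simp add: is_cycle_def)
  moreover have "Suc i mod length c = Suc (i mod length c)"
    using True by (simp add: mod_Suc)
  ultimately show ?thesis by (simp add: cycle_vertex_def)
next
  case False
  then have "Suc (i mod length c) = length c"
    using length_cycle_pos by (meson Suc_lessI mod_less_divisor)
  then have "i mod length c = length c - 1" and "Suc i mod length c = 0"
    by (simp_all add: mod_Suc)
  then have "c ! (i mod length c) = last c" and "Suc i mod length c = 0"
    using length_cycle_pos by (simp_all add: last_conv_nth)
  then show ?thesis
    using cycle length_cycle_pos by (simp add: cycle_vertex_def is_cycle_def hd_conv_nth)
qed

lemma cycle_vertex_eq_iff: "cycle_vertex x = cycle_vertex y \<longleftrightarrow> x mod length c = y mod length c"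
  using cycle length_cycle_pos unfolding cycle_vertex_def is_cycle_def by (metis mod_less_divisor)

lemma edge_from_cycle_vertex: "f \<in> edges E \<Longrightarrow> src E f = cycle_vertex m \<Longrightarrow> f = c ! (m mod length c)"
  using no_exit length_cycle_pos unfolding no_exit_def cycle_vertex_def by auto

lemma src_inv_cycle_vertex: "src_inv E (cycle_vertex m) = {c ! (m mod length c)}"
  using edge_from_cycle_vertex cycle_edge by (auto simp: src_inv_def cycle_vertex_def)

lemma cycle_vertex_regular: "cycle_vertex m \<in> Reg E"
  using src_inv_cycle_vertex cycle_vertex_in_verts by (simp add: Reg_def)

lemma cycle_path_0 [simp]: "cycle_path 0 = []"
  by (simp add: cycle_path_def)

lemma cycle_path_Suc: "cycle_path (Suc m) = cycle_path m @ [c ! (m mod length c)]"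
  by (simp add: cycle_path_def)

lemma length_cycle_path [simp]: "length (cycle_path m) = m"
  by (simp add: cycle_path_def)

lemma cycle_path_eq_Nil_iff [simp]: "cycle_path m = [] \<longleftrightarrow> m = 0"
  using length_cycle_path by (metis length_0_conv)

lemma nth_cycle_path: "t < m \<Longrightarrow> cycle_path m ! t = c ! (t mod length c)"
  by (simp add: cycle_path_def)

lemma cycle_path_edges: "set (cycle_path m) \<subseteq> edges E"
  using cycle_edge by (auto simp: cycle_path_def)

lemma hd_cycle_path: "0 < m \<Longrightarrow> src E (hd (cycle_path m)) = w"
  using length_cycle_pos by (simp add: cycle_path_def hd_map base hd_conv_nth)

lemma rng_last_cycle_path: "0 < m \<Longrightarrow> rng E (last (cycle_path m)) = cycle_vertex m"
  by (cases m) (simp_all add: cycle_path_Suc rng_cycle_edge)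

lemma cycle_path_is_path: "is_path E (cycle_path m)"
proof (induction m)
  case (Suc m)
  then show ?case
    by (cases m) (simp_all add: cycle_path_Suc successively_append_iff
        rng_last_cycle_path rng_cycle_edge cycle_vertex_def)
qed simp

lemma cycle_path_add:
  "cycle_path (x + y) = cycle_path x @ map (\<lambda>i. c ! ((x + i) mod length c)) [0..<y]"
  by (induction y) (simp_all add: cycle_path_Suc)

lemma cycle_path_add_mult:
  "cycle_path (i * length c + k) = cycle_path (i * length c) @ cycle_path k"
  unfolding cycle_path_add by (simp add: cycle_path_def)

lemma cycle_path_mult: "cycle_path (i * length c) = concat (replicate i c)"
proof (induction i)
  case (Suc i)
  have "map (\<lambda>t. c ! ((i * length c + t) mod length c)) [0..<length c] = c"
    by (rule nth_equalityI) auto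
  then have "cycle_path (i * length c + length c) = cycle_path (i * length c) @ c"
    by (simp add: cycle_path_add)
  with Suc show ?case
    by (simp add: add.commute replicate_append_same[symmetric] del: replicate_append_same)
qed simp

lemma cycle_path_take: "k \<le> length c \<Longrightarrow> cycle_path k = take k c"
  by (rule nth_equalityI) (auto simp: nth_cycle_path)

lemma path_follows_cycle:
  assumes "is_path E q" "set q \<subseteq> edges E" "q \<noteq> []" "src E (hd q) = cycle_vertex m" "i < length q"
  shows "q ! i = c ! ((m + i) mod length c)"
  using assms
proof (induction q arbitrary: m i)
  case (Cons e q)
  have e: "e = c ! (m mod length c)"
    using Cons.prems edge_from_cycle_vertex by simp
  show ?case
  proof (cases i)
    case (Suc i')
    then have "q \<noteq> []" using Cons.prems(5) by auto
    then have "src E (hd q) = cycle_vertex (Suc m)"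
      using Cons.prems(1) e rng_cycle_edge by (simp add: successively_Cons)
    with Cons.IH[of "Suc m" i'] Cons.prems \<open>q \<noteq> []\<close> Suc show ?thesis
      by (simp add: successively_Cons)
  qed (simp add: e)
qed simp

lemma path_from_base:
  assumes "is_path E q" "set q \<subseteq> edges E" "q \<noteq> []" "src E (hd q) = w"
  shows "q = cycle_path (length q)"
  using path_follows_cycle[of q 0] assms by (intro nth_equalityI) (auto simp: nth_cycle_path)

section \<open>Reading a corner word from left to right\<close>

text \<open>The
  repeated \<open>w\<close> leaves a letter to the left of every rewrite at the end of the word, which
  the rewriting lemmas need.\<close>
definition reduced_word :: "nat \<Rightarrow> 'e list \<Rightarrow> ('v,'e) gen list" where
  "reduced_word a q = GV w # GV w # map GE (cycle_path a) @ rev (map GG q)"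

definition admissible :: "nat \<Rightarrow> 'e list \<Rightarrow> bool" where
  "admissible a q \<longleftrightarrow> set q \<subseteq> edges E \<and> is_path E q \<and> (q \<noteq> [] \<longrightarrow> rng E (last q) = cycle_vertex a)"

definition reduced_end :: "nat \<Rightarrow> 'e list \<Rightarrow> 'v" where
  "reduced_end a q = (if q = [] then cycle_vertex a else src E (hd q))"

lemma reduced_word_gens_ok: "set q \<subseteq> edges E \<Longrightarrow> gens_ok E (reduced_word a q)"
  using cycle_path_edges w_in_verts by (simp add: reduced_word_def gen_ok_def)

lemma length_reduced_word: "2 \<le> length (reduced_word a q)"
  by (simp add: reduced_word_def)

lemma gen_rng_last_reduced_word: "gen_rng E (last (reduced_word a q)) = reduced_end a q"
  by (cases q) (auto simp: reduced_word_def reduced_end_def last_map rng_last_cycle_path)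

lemma reduced_word_mismatch_zero:
  assumes "admissible a q" "gen_ok E l" "gen_src E l \<noteq> reduced_end a q"
  shows "cohn_eq E X (wmono (reduced_word a q @ [l]) :: ('v,'e,'k::field) fa) 0"
  using assms gen_rng_last_reduced_word
  by (intro vertex_mismatch_zero wf reduced_word_gens_ok length_reduced_word)
    (auto simp: admissible_def)

lemma reduced_word_absorb_vertex:
  assumes "admissible a q"
  shows "cohn_eq E X (wmono (reduced_word a q @ [GV (reduced_end a q)]) :: ('v,'e,'k::field) fa)
    (wmono (reduced_word a q))"
  using absorb_vertex_right[of E "reduced_word a q" "[]" X] assms
  by (simp add: reduced_word_gens_ok length_reduced_word gen_rng_last_reduced_word admissible_def)

definition scan_reducible :: "('v,'e,'k::field) fa \<Rightarrow> bool" where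
  "scan_reducible f \<longleftrightarrow>
    cohn_eq E X f 0 \<or> (\<exists>a q. admissible a q \<and> cohn_eq E X f (wmono (reduced_word a q)))"

lemma scan_reducible_cong: "cohn_eq E X f g \<Longrightarrow> scan_reducible g \<Longrightarrow> scan_reducible f"
  unfolding scan_reducible_def by (blast intro: cohn_eq_trans)

lemma scan_reducible_reduced_word: "admissible a q \<Longrightarrow> scan_reducible (wmono (reduced_word a q))"
  unfolding scan_reducible_def by (blast intro: cohn_eq_refl)

lemma scan_step_edge:
  assumes "admissible a q" "f \<in> edges E" "src E f = reduced_end a q"
  shows "scan_reducible (wmono (reduced_word a q @ [GE f]) :: ('v,'e,'k::field) fa)"
proof (cases q)
  case Nil
  then have "f = c ! (a mod length c)"
    using assms edge_from_cycle_vertex by (simp add: reduced_end_def)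
  then have "reduced_word a q @ [GE f] = reduced_word (Suc a) []"
    using Nil by (simp add: reduced_word_def cycle_path_Suc)
  moreover have "admissible (Suc a) []" by (simp add: admissible_def)
  ultimately show ?thesis by (simp add: scan_reducible_reduced_word)
next
  case (Cons e q')
  have q': "admissible a q'" and e: "e \<in> edges E" and rng_e: "rng E e = reduced_end a q'"
    using assms(1) Cons by (auto simp: admissible_def reduced_end_def successively_Cons)
  have V: "reduced_word a q = reduced_word a q' @ [GG e]"
    using Cons by (simp add: reduced_word_def)
  show ?thesis
  proof (cases "f = e")
    case True
    have "cohn_eq E X (wmono (reduced_word a q' @ [GG e, GE e]) :: ('v,'e,'k) fa)
        (wmono (reduced_word a q' @ [GV (rng E e)]))"
      using q' e by (intro ghost_edge_cancel reduced_word_gens_ok)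
        (auto simp: admissible_def reduced_word_def)
    also have "cohn_eq E X (wmono (reduced_word a q' @ [GV (rng E e)]) :: ('v,'e,'k) fa)
        (wmono (reduced_word a q'))"
      using reduced_word_absorb_vertex[OF q'] rng_e by simp
    finally show ?thesis
      using q' V True unfolding scan_reducible_def by auto
  next
    case False
    have "cohn_eq E X (wmono (reduced_word a q' @ [GG e, GE f]) :: ('v,'e,'k) fa) 0"
      using q' e assms(2) False
      by (intro ghost_edge_mismatch_zero reduced_word_gens_ok)
        (auto simp: admissible_def reduced_word_def)
    with V show ?thesis unfolding scan_reducible_def by simp
  qed
qed

lemma scan_step:
  assumes "admissible a q" "gen_ok E g"
  shows "scan_reducible (wmono (reduced_word a q @ [g]) :: ('v,'e,'k::field) fa)"
proof (cases "gen_src E g = reduced_end a q")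
  case False
  with reduced_word_mismatch_zero[OF assms] show ?thesis
    unfolding scan_reducible_def by blast
next
  case True
  show ?thesis
  proof (cases g)
    case (GV v)
    with True reduced_word_absorb_vertex[OF assms(1)] assms(1) show ?thesis
      unfolding scan_reducible_def by auto
  next
    case (GE f)
    with True scan_step_edge[OF assms(1)] assms(2) show ?thesis
      by (simp add: gen_ok_def)
  next
    case (GG f)
    then have "reduced_word a q @ [g] = reduced_word a (f # q)"
      by (simp add: reduced_word_def)
    moreover have "admissible a (f # q)"
      using assms True GG
      by (auto simp: admissible_def reduced_end_def gen_ok_def successively_Cons)
    ultimately show ?thesis by (simp add: scan_reducible_reduced_word)
  qed
qed

lemma scan_reducible_word:
  "gens_ok E u \<Longrightarrow> scan_reducible (wmono (GV w # GV w # u) :: ('v,'e,'k::field) fa)"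
proof (induction u rule: rev_induct)
  case Nil
  have "reduced_word 0 [] = [GV w, GV w]" "admissible 0 []"
    by (simp_all add: reduced_word_def admissible_def)
  then show ?case by (metis scan_reducible_reduced_word)
next
  case (snoc g u)
  then have g: "gens_ok E [g]" and "scan_reducible (wmono (GV w # GV w # u) :: ('v,'e,'k) fa)"
    by simp_all
  then consider "cohn_eq E X (wmono (GV w # GV w # u) :: ('v,'e,'k) fa) 0"
    | a q where "admissible a q" "cohn_eq E X (wmono (GV w # GV w # u) :: ('v,'e,'k) fa)
        (wmono (reduced_word a q))"
    unfolding scan_reducible_def by blast
  then show ?case
  proof cases
    case 1
    from cohn_eq_append[OF g _ this] show ?thesis
      unfolding scan_reducible_def by (simp add: fmul_wmono)
  next
    case 2
    from cohn_eq_append[OF g _ 2(2)] have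
      "cohn_eq E X (wmono (GV w # GV w # u @ [g]) :: ('v,'e,'k) fa)
          (wmono (reduced_word a q @ [g]))"
      by (simp add: fmul_wmono)
    then show ?thesis
      using scan_step[OF 2(1)] g by (auto intro: scan_reducible_cong)
  qed
qed

section \<open>Normal forms\<close>

text \<open>\<open>c ! (k - 1)\<close> is the edge \<open>e\<^sub>k\<close> of the paper, lists being indexed from \<open>0\<close>.\<close>
definition index_set :: "nat set" where
  "index_set = {0} \<union> {k. 1 \<le> k \<and> k < length c \<and> src E (c ! (k - 1)) \<in> Reg E - X}"

lemma index_set_less: "k \<in> index_set \<Longrightarrow> k < length c"
  using length_cycle_pos by (auto simp: index_set_def)

lemma finite_index_set: "finite index_set"
  using index_set_less by (meson finite_nat_set_iff_bounded)

lemma closed_reduced_word: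
  assumes "admissible a q" "reduced_end a q = w"
  shows "\<exists>b. q = cycle_path b \<and> a mod length c = b mod length c"
proof (cases "q = []")
  case True
  then show ?thesis
    using assms cycle_vertex_eq_iff[of a 0] by (auto simp: reduced_end_def intro: exI[of _ 0])
next
  case False
  then have q: "q = cycle_path (length q)"
    using assms by (intro path_from_base) (auto simp: admissible_def reduced_end_def)
  with False assms(1) have "cycle_vertex (length q) = cycle_vertex a"
    by (metis admissible_def length_greater_0_conv rng_last_cycle_path)
  with q show ?thesis by (metis cycle_vertex_eq_iff)
qed

lemma reduced_word_contract:
  assumes "a mod length c = b mod length c" "cycle_vertex a \<in> X"
  shows "cohn_eq E X (wmono (reduced_word (Suc a) (cycle_path (Suc b))) :: ('v,'e,'k::field) fa)
    (wmono (reduced_word a (cycle_path b)))"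
proof -
  define e where "e = c ! (a mod length c)"
  define ghosts :: "('v,'e) gen list" where "ghosts = rev (map GG (cycle_path b))"
  have "reduced_word (Suc a) (cycle_path (Suc b)) = reduced_word a [] @ [GE e, GG e] @ ghosts"
    using assms(1) by (simp add: reduced_word_def cycle_path_Suc e_def ghosts_def)
  also have "cohn_eq E X (wmono (reduced_word a [] @ [GE e, GG e] @ ghosts) :: ('v,'e,'k) fa)
      (wmono (reduced_word a [] @ [GV (cycle_vertex a)] @ ghosts))"
    using assms(2) src_inv_cycle_vertex[of a] cycle_path_edges[of b]
    by (intro cuntz_krieger_rewrite reduced_word_gens_ok)
      (auto simp: e_def ghosts_def reduced_word_def)
  also have "cohn_eq E X (wmono (reduced_word a [] @ [GV (cycle_vertex a)] @ ghosts) :: ('v,'e,'k) fa)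
      (wmono (reduced_word a (cycle_path b)))"
    using absorb_vertex_right[of E "reduced_word a []" ghosts X] cycle_path_edges[of b]
    by (simp add: reduced_word_gens_ok length_reduced_word gen_rng_last_reduced_word reduced_end_def
        ghosts_def) (simp add: reduced_word_def)
  finally show ?thesis .
qed

lemma reduced_word_normalize:
  assumes "k < length c"
  shows "\<exists>k'\<in>index_set.
    cohn_eq E X (wmono (reduced_word (i * length c + k) (cycle_path (j * length c + k)))
      :: ('v,'e,'k::field) fa)
      (wmono (reduced_word (i * length c + k') (cycle_path (j * length c + k'))))"
  using assms
proof (induction k)
  case 0
  then show ?case by (auto simp: index_set_def)
next
  case (Suc k)
  show ?case
  proof (cases "Suc k \<in> index_set")
    case True
    then show ?thesis by (metis cohn_eq_refl)
  next
    case False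
    then have "src E (c ! k) \<in> X"
      using Suc.prems cycle_vertex_regular[of k] by (auto simp: index_set_def cycle_vertex_def)
    then have "cycle_vertex (i * length c + k) \<in> X"
      using Suc.prems by (simp add: cycle_vertex_def)
    then have "cohn_eq E X
        (wmono (reduced_word (i * length c + Suc k) (cycle_path (j * length c + Suc k)))
        :: ('v,'e,'k) fa)
        (wmono (reduced_word (i * length c + k) (cycle_path (j * length c + k))))"
      using reduced_word_contract[of "i * length c + k" "j * length c + k"] by simp
    with Suc show ?thesis by (meson Suc_lessD cohn_eq_trans)
  qed
qed

definition basis_word :: "nat \<Rightarrow> nat \<Rightarrow> nat \<Rightarrow> ('v,'e) gen list" where
  "basis_word i j k = cpow w c i @ mu w c k @ mu_star w c k @ cpow_star w c j"

definition edge_word :: "nat \<Rightarrow> ('v,'e) gen list" where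
  "edge_word m = (if m = 0 then [GV w] else map GE (cycle_path m))"

definition ghost_word :: "nat \<Rightarrow> ('v,'e) gen list" where
  "ghost_word m = (if m = 0 then [GV w] else rev (map GG (cycle_path m)))"

lemma basis_word_eq:
  assumes "k \<le> length c"
  shows "basis_word i j k = edge_word (i * length c)
    @ edge_word k @ ghost_word k @ ghost_word (j * length c)"
  using assms length_cycle_pos
  by (simp add: basis_word_def cpow_def mu_def mu_star_def cpow_star_def edge_word_def ghost_word_def
      cycle_path_mult cycle_path_take map_concat rev_concat rev_map)

lemma edge_word_not_Nil [simp]: "edge_word m \<noteq> []"
  and gens_ok_edge_word: "gens_ok E (edge_word m)"
  and composable_edge_word: "composable E (edge_word m)"
  and gen_src_hd_edge_word: "gen_src E (hd (edge_word m)) = w"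
  and gen_rng_last_edge_word: "gen_rng E (last (edge_word m)) = cycle_vertex m"
  and filter_edge_word: "filter (\<lambda>g. g \<notin> range GV) (edge_word m) = map GE (cycle_path m)"
  using w_in_verts cycle_path_edges[of m] cycle_path_is_path[of m] hd_cycle_path[of m]
    rng_last_cycle_path[of m]
  by (auto simp: edge_word_def gen_ok_def hd_map last_map image_iff)

lemma ghost_word_not_Nil [simp]: "ghost_word m \<noteq> []"
  and gens_ok_ghost_word: "gens_ok E (ghost_word m)"
  and composable_ghost_word: "composable E (ghost_word m)"
  and gen_src_hd_ghost_word: "gen_src E (hd (ghost_word m)) = cycle_vertex m"
  and gen_rng_last_ghost_word: "gen_rng E (last (ghost_word m)) = w"
  and filter_ghost_word: "filter (\<lambda>g. g \<notin> range GV) (ghost_word m) = rev (map GG (cycle_path m))"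
  using w_in_verts cycle_path_edges[of m] cycle_path_is_path[of m] hd_cycle_path[of m]
    rng_last_cycle_path[of m]
  by (auto simp: ghost_word_def gen_ok_def hd_rev last_rev hd_map last_map image_iff
      rev_filter[symmetric] simp del: successively_rev)

lemma basis_word_props:
  assumes "k \<le> length c"
  shows "gens_ok E (basis_word i j k)" "composable E (basis_word i j k)"
    and "2 \<le> length (basis_word i j k)"
    and "gen_src E (hd (basis_word i j k)) = w" "gen_rng E (last (basis_word i j k)) = w"
    and "filter (\<lambda>g. g \<notin> range GV) (basis_word i j k) =
      map GE (cycle_path (i * length c + k)) @ rev (map GG (cycle_path (j * length c + k)))"
proof -
  have "0 < length (edge_word (i * length c))" "0 < length (edge_word k)"
    by simp_all
  then show "2 \<le> length (basis_word i j k)"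
    unfolding basis_word_eq[OF assms] length_append by linarith
qed (simp_all add: basis_word_eq[OF assms] gens_ok_edge_word gens_ok_ghost_word
    composable_edge_word composable_ghost_word successively_append_iff gen_src_hd_edge_word
    gen_rng_last_edge_word gen_src_hd_ghost_word gen_rng_last_ghost_word
    filter_edge_word filter_ghost_word cycle_path_add_mult)

lemma basis_word_reduced:
  assumes "k \<le> length c"
  shows "cohn_eq E X (wmono (basis_word i j k) :: ('v,'e,'k::field) fa)
    (wmono (reduced_word (i * length c + k) (cycle_path (j * length c + k))))"
proof -
  let ?B = "basis_word i j k"
  note B = basis_word_props[OF assms, of i j]
  have "cohn_eq E X (wmono (GV (gen_src E (hd ?B)) # ?B) :: ('v,'e,'k) fa) (wmono ?B)"
    using B by (intro absorb_vertex_hd)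
  then have "cohn_eq E X (wmono ?B :: ('v,'e,'k) fa) (wmono (GV w # ?B))"
    using B(4) by (simp add: cohn_eq_sym)
  also have "cohn_eq E X (wmono (GV w # ?B) :: ('v,'e,'k) fa) (wmono (GV w # GV w # ?B))"
    by (rule cohn_eq_sym, rule absorb_double_vertex) (use B w_in_verts in auto)
  also have "cohn_eq E X (wmono (GV w # GV w # ?B) :: ('v,'e,'k) fa)
      (wmono (GV w # GV w # filter (\<lambda>g. g \<notin> range GV) ?B))"
    using B w_in_verts delete_vertex_letters[of E "[GV w, GV w]" ?B X]
    by (auto simp: gen_ok_def successively_Cons)
  finally show ?thesis
    using B(6) by (simp add: reduced_word_def)
qed

lemma corner_fixes_basis_word:
  assumes "k \<le> length c"
  shows "cohn_eq E X (wmono (GV w # basis_word i j k @ [GV w]) :: ('v,'e,'k::field) fa)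
    (wmono (basis_word i j k))"
proof -
  let ?B = "basis_word i j k"
  note B = basis_word_props[OF assms, of i j]
  have "cohn_eq E X (wmono (GV w # ?B @ [GV w]) :: ('v,'e,'k) fa)
      (wmono ([GV w, GV w] @ ?B @ [GV w]))"
    using B w_in_verts by (simp add: absorb_double_vertex cohn_eq_sym gen_ok_def)
  also have "cohn_eq E X (wmono ([GV w, GV w] @ ?B @ [GV w]) :: ('v,'e,'k) fa)
      (wmono ([GV w, GV w] @ filter (\<lambda>g. g \<notin> range GV) (?B @ [GV w])))"
    using B w_in_verts by (intro delete_vertex_letters)
      (auto simp: gen_ok_def successively_Cons successively_append_iff hd_append)
  also have "[GV w, GV w] @ filter (\<lambda>g. g \<notin> range GV) (?B @ [GV w]) =
      reduced_word (i * length c + k) (cycle_path (j * length c + k))"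
    using B(6) by (simp add: reduced_word_def)
  also have "cohn_eq E X (wmono \<dots> :: ('v,'e,'k) fa) (wmono ?B)"
    using basis_word_reduced[OF assms] by (rule cohn_eq_sym)
  finally show ?thesis .
qed

lemma closed_reduced_word_basis:
  assumes "admissible a q" "reduced_end a q = w"
  shows "\<exists>i j k. k \<in> index_set \<and>
    cohn_eq E X (wmono (reduced_word a q) :: ('v,'e,'k::field) fa) (wmono (basis_word i j k))"
proof -
  obtain b where q: "q = cycle_path b" and ab: "a mod length c = b mod length c"
    using closed_reduced_word[OF assms] by blast
  define i j k where "i = a div length c" and "j = b div length c" and "k = a mod length c"
  have a: "i * length c + k = a" and k: "k < length c"
    using length_cycle_pos by (simp_all add: i_def k_def)
  have b: "j * length c + k = b"
    by (simp add: j_def k_def ab)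
  obtain k' where k': "k' \<in> index_set" and normal:
    "cohn_eq E X (wmono (reduced_word a q) :: ('v,'e,'k) fa)
      (wmono (reduced_word (i * length c + k') (cycle_path (j * length c + k'))))"
    using reduced_word_normalize[OF k, of i j] unfolding a b q by blast
  note normal
  also have "cohn_eq E X \<dots> (wmono (basis_word i j k'))"
    using index_set_less[OF k'] by (metis less_imp_le basis_word_reduced cohn_eq_sym)
  finally show ?thesis using k' by blast
qed

section \<open>The corner\<close>

definition basis_sum :: "(nat \<Rightarrow> nat \<Rightarrow> nat \<Rightarrow> 'k::field) \<Rightarrow> nat \<Rightarrow> nat \<Rightarrow> ('v,'e,'k) fa" where
  "basis_sum l t1 t2 = (\<Sum>i\<le>t1. \<Sum>j\<le>t2. \<Sum>k\<in>index_set. smul (l i j k) (wmono (basis_word i j k)))"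

lemma basis_sum_extend:
  assumes "t1 \<le> s1" "t2 \<le> s2"
  shows "basis_sum l t1 t2 = basis_sum (\<lambda>i j k. if i \<le> t1 \<and> j \<le> t2 then l i j k else 0) s1 s2"
  unfolding basis_sum_def
proof (rule sym, rule sum.mono_neutral_cong_right)
  fix i assume "i \<in> {..t1}"
  then show "(\<Sum>j\<le>s2. \<Sum>k\<in>index_set. smul (if i \<le> t1 \<and> j \<le> t2 then l i j k else 0)
      (wmono (basis_word i j k))) =
      (\<Sum>j\<le>t2. \<Sum>k\<in>index_set. smul (l i j k) (wmono (basis_word i j k)))"
    using assms finite_index_set by (intro sum.mono_neutral_cong_right) auto
qed (use assms in auto)

lemma basis_sum_add:
  "basis_sum l t1 t2 + basis_sum l' t1 t2 = basis_sum (\<lambda>i j k. l i j k + l' i j k) t1 t2"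
  by (simp add: basis_sum_def smul_left_distrib sum.distrib)

lemma basis_sum_smul: "smul a (basis_sum l t1 t2) = basis_sum (\<lambda>i j k. a * l i j k) t1 t2"
  by (simp add: basis_sum_def smul_sum_right smul_smul)

lemma basis_sum_zero: "basis_sum (\<lambda>_ _ _. 0) t1 t2 = 0"
  by (simp add: basis_sum_def)

lemma basis_sum_single:
  assumes "k \<in> index_set"
  shows "basis_sum (\<lambda>i' j' k'. of_bool (i' = i \<and> j' = j \<and> k' = k)) i j = wmono (basis_word i j k)"
proof -
  have inner: "(\<Sum>k'\<in>index_set. smul (of_bool (i' = i \<and> j' = j \<and> k' = k))
      (wmono (basis_word i' j' k'))) =
      (if i' = i \<and> j' = j then wmono (basis_word i j k) else 0)" for i' j'
    using assms finite_index_set by (cases "i' = i \<and> j' = j") (auto intro: sum.neutral)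
  have middle: "(\<Sum>j'\<le>j. if i' = i \<and> j' = j then wmono (basis_word i j k) else 0) =
      (if i' = i then wmono (basis_word i j k) else 0)" for i'
    by (cases "i' = i") (auto intro: sum.neutral)
  show ?thesis
    unfolding basis_sum_def inner middle by simp
qed

definition basis_representable :: "('v,'e,'k::field) fa \<Rightarrow> bool" where
  "basis_representable f \<longleftrightarrow> (\<exists>l t1 t2. cohn_eq E X f (basis_sum l t1 t2))"

lemma basis_representable_cong:
  "cohn_eq E X f g \<Longrightarrow> basis_representable g \<Longrightarrow> basis_representable f"
  unfolding basis_representable_def by (blast intro: cohn_eq_trans)

lemma basis_representable_zero: "basis_representable 0"
  unfolding basis_representable_def using basis_sum_zero by (metis cohn_eq_refl)

lemma basis_representable_add:
  assumes "basis_representable f" "basis_representable g"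
  shows "basis_representable (f + g)"
proof -
  obtain l t1 t2 l' s1 s2 where f: "cohn_eq E X f (basis_sum l t1 t2)"
    and g: "cohn_eq E X g (basis_sum l' s1 s2)"
    using assms unfolding basis_representable_def by blast
  define m1 m2 where "m1 = max t1 s1" and "m2 = max t2 s2"
  have "cohn_eq E X (f + g) (basis_sum l t1 t2 + basis_sum l' s1 s2)"
    using f g by (rule cohn_eq_add)
  also have "basis_sum l t1 t2 + basis_sum l' s1 s2 =
      basis_sum (\<lambda>i j k. (if i \<le> t1 \<and> j \<le> t2 then l i j k else 0) +
        (if i \<le> s1 \<and> j \<le> s2 then l' i j k else 0)) m1 m2"
    unfolding basis_sum_add[symmetric] m1_def m2_def
    by (intro arg_cong2[where f = "(+)"] basis_sum_extend) auto
  finally show ?thesis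
    unfolding basis_representable_def by blast
qed

lemma basis_representable_smul: "basis_representable f \<Longrightarrow> basis_representable (smul a f)"
  unfolding basis_representable_def by (metis basis_sum_smul cohn_eq_smul)

lemma basis_representable_sum:
  "(\<And>i. i \<in> S \<Longrightarrow> basis_representable (F i)) \<Longrightarrow> basis_representable (sum F S)"
  by (induction S rule: infinite_finite_induct)
    (simp_all add: basis_representable_zero basis_representable_add)

lemma basis_representable_basis_word:
  "k \<in> index_set \<Longrightarrow> basis_representable (wmono (basis_word i j k))"
  unfolding basis_representable_def by (metis basis_sum_single cohn_eq_refl)

lemma closing_reduced_word_representable:
  assumes "admissible a q"
  shows "basis_representable (wmono (reduced_word a q @ [GV w]) :: ('v,'e,'k::field) fa)"
proof (cases "reduced_end a q = w")
  case True
  then obtain i j k where "k \<in> index_set"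
    and "cohn_eq E X (wmono (reduced_word a q) :: ('v,'e,'k) fa) (wmono (basis_word i j k))"
    using closed_reduced_word_basis[OF assms] by blast
  moreover have "cohn_eq E X (wmono (reduced_word a q @ [GV w]) :: ('v,'e,'k) fa)
      (wmono (reduced_word a q))"
    using reduced_word_absorb_vertex[OF assms] True by simp
  ultimately show ?thesis
    by (meson cohn_eq_trans basis_representable_cong basis_representable_basis_word)
next
  case False
  then have "cohn_eq E X (wmono (reduced_word a q @ [GV w]) :: ('v,'e,'k) fa) 0"
    using w_in_verts by (intro reduced_word_mismatch_zero[OF assms]) (auto simp: gen_ok_def)
  then show ?thesis
    using basis_representable_zero by (rule basis_representable_cong)
qed

lemma corner_word_representable:
  assumes "gens_ok E u"
  shows "basis_representable (wmono (GV w # u @ [GV w]) :: ('v,'e,'k::field) fa)"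
proof -
  have w: "gens_ok E [GV w]"
    using w_in_verts by (simp add: gen_ok_def)
  have "scan_reducible (wmono (GV w # GV w # u) :: ('v,'e,'k) fa)"
    using assms by (rule scan_reducible_word)
  then have "basis_representable (wmono (GV w # GV w # u @ [GV w]) :: ('v,'e,'k) fa)"
    unfolding scan_reducible_def
  proof (elim disjE exE conjE)
    assume "cohn_eq E X (wmono (GV w # GV w # u) :: ('v,'e,'k) fa) 0"
    from cohn_eq_append[OF w _ this] show ?thesis
      using basis_representable_zero by (simp add: fmul_wmono) (erule basis_representable_cong)
  next
    fix a q
    assume "admissible a q" and "cohn_eq E X (wmono (GV w # GV w # u) :: ('v,'e,'k) fa)
        (wmono (reduced_word a q))"
    from cohn_eq_append[OF w _ this(2)] show ?thesis
      using closing_reduced_word_representable[OF \<open>admissible a q\<close>]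
      by (simp add: fmul_wmono) (erule basis_representable_cong)
  qed
  moreover have "cohn_eq E X (wmono (GV w # u @ [GV w]) :: ('v,'e,'k) fa)
      (wmono (GV w # GV w # u @ [GV w]))"
    using assms w w_in_verts by (simp add: absorb_double_vertex cohn_eq_sym)
  ultimately show ?thesis
    by (blast intro: basis_representable_cong)
qed

lemma corner_element_representable:
  assumes "x \<in> fa_elems E"
  shows "basis_representable (fmul (fmul (wmono [GV w]) x) (wmono [GV w]) :: ('v,'e,'k::field) fa)"
proof -
  have "fmul (fmul (wmono [GV w]) x) (wmono [GV w]) =
      (\<Sum>u | x u \<noteq> 0. smul (x u) (fmul (fmul (wmono [GV w]) (wmono u)) (wmono [GV w])))"
    by (subst fa_elems_expand[OF assms])
      (simp only: fmul_sum_left fmul_sum_right fmul_smul_left fmul_smul_right)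
  also have "\<dots> = (\<Sum>u | x u \<noteq> 0. smul (x u) (wmono (GV w # u @ [GV w])))"
    by (simp add: fmul_wmono)
  finally show ?thesis
    using assms by (auto simp: fa_elems_def gens_ok_def
        intro!: basis_representable_sum basis_representable_smul corner_word_representable)
qed

lemma basis_sum_in_corner:
  "basis_sum l t1 t2 \<in> fa_elems E"
  "cohn_eq E X (fmul (fmul (wmono [GV w]) (basis_sum l t1 t2)) (wmono [GV w])) (basis_sum l t1 t2)"
proof -
  have k: "k \<in> index_set \<Longrightarrow> k \<le> length c" for k
    using index_set_less by (simp add: less_imp_le)
  have "basis_word i j k \<noteq> []" if "k \<in> index_set" for i j k
    using basis_word_props(3)[OF k[OF that], of i j] by auto
  then show "basis_sum l t1 t2 \<in> fa_elems E"
    unfolding basis_sum_def using basis_word_props(1) k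
    by (intro sum_in_fa_elems smul_in_fa_elems wmono_in_fa_elems) auto
  have corner: "fmul (fmul (wmono [GV w]) (basis_sum l t1 t2)) (wmono [GV w]) =
      (\<Sum>i\<le>t1. \<Sum>j\<le>t2. \<Sum>k\<in>index_set. smul (l i j k) (wmono (GV w # basis_word i j k @ [GV w])))"
    unfolding basis_sum_def
    by (simp only: fmul_sum_left fmul_sum_right fmul_smul_left fmul_smul_right
        fmul_wmono append_Cons append_Nil)
  show "cohn_eq E X (fmul (fmul (wmono [GV w]) (basis_sum l t1 t2)) (wmono [GV w]))
    (basis_sum l t1 t2)"
    unfolding corner unfolding basis_sum_def using k
    by (intro cohn_eq_sum cohn_eq_smul corner_fixes_basis_word)
qed

theorem corner_eq_basis_sums:
  "(corner E X w :: ('v,'e,'k::field) fa set set) =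
    {cohn_cls E X (basis_sum l t1 t2) | (l :: nat \<Rightarrow> nat \<Rightarrow> nat \<Rightarrow> 'k) t1 t2. True}"
proof (intro equalityI subsetI)
  fix y assume "y \<in> (corner E X w :: ('v,'e,'k) fa set set)"
  then obtain x where "x \<in> fa_elems E"
    and y: "y = cohn_cls E X (fmul (fmul (wmono [GV w]) x) (wmono [GV w]))"
    by (auto simp: corner_def)
  then obtain l t1 t2 where "cohn_eq E X (fmul (fmul (wmono [GV w]) x) (wmono [GV w]))
    (basis_sum l t1 t2)"
    using corner_element_representable unfolding basis_representable_def by blast
  with y have "y = cohn_cls E X (basis_sum l t1 t2)"
    by (simp add: cohn_cls_cong)
  then show "y \<in> {cohn_cls E X (basis_sum l t1 t2) | (l :: nat \<Rightarrow> nat \<Rightarrow> nat \<Rightarrow> 'k) t1 t2. True}"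
    by blast
next
  fix y assume "y \<in> {cohn_cls E X (basis_sum l t1 t2) | (l :: nat \<Rightarrow> nat \<Rightarrow> nat \<Rightarrow> 'k) t1 t2. True}"
  then obtain l :: "nat \<Rightarrow> nat \<Rightarrow> nat \<Rightarrow> 'k" and t1 t2 where y: "y = cohn_cls E X (basis_sum l t1 t2)"
    by blast
  then show "y \<in> corner E X w"
    using basis_sum_in_corner[of l t1 t2] unfolding corner_def by (auto dest: cohn_cls_cong)
qed

end

theorem mainTheorem1:
  fixes E :: "('v,'e) graph" and X :: "'v set" and c :: "'e list" and w :: 'v
  assumes "wf_graph E"
    and "X \<subseteq> Reg E"
    and "is_cycle E c" and "no_exit E c" and "w = src E (hd c)"
  shows "(corner E X w :: ('v,'e,'k::field) fa set set) =
    {cohn_cls E X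
       (\<Sum>i\<le>t1. \<Sum>j\<le>t2.
          \<Sum>k\<in>{0} \<union> {k. 1 \<le> k \<and> k < length c \<and> src E (c ! (k - 1)) \<in> Reg E - X}.
            (\<lambda>z. l i j k * wmono (cpow w c i @ mu w c k @ mu_star w c k @ cpow_star w c j) z))
     | (l :: nat \<Rightarrow> nat \<Rightarrow> nat \<Rightarrow> 'k) t1 t2. True}"
proof -
  interpret exitless_cycle E X c w
    using assms by unfold_locales
  show ?thesis
    using corner_eq_basis_sums unfolding basis_sum_def index_set_def basis_word_def smul_def .
qed

end
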